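(* Let $1\le l\le r$ and consider a canonical noiseless MMV model $B=AX$ in which $A$ satisfies $0\le \delta^L_{2k-r+l}(A)<1$ and the nonzero rows of $X$ are in general position. Let $I\subset\{1,\dots,n\}$ be an index set with $|I|\le \min(2(k-r)+l,\,k)$ and $|I\setminus \operatorname{supp}X|\le k-r+l$. Then the following are equivalent: (i) $|I\cap \operatorname{supp}X|\ge k-r+1$; (ii) $\operatorname{rank}[A_I~B]<|I|+r$.
   Context: Canonical MMV setting: $m,n,r,k$ are positive integers with $r\le m<n$ and $r\le k$. $A\in\mathbb{R}^{m\times n}$ is the sensing matrix with columns $\mathbf a_1,\dots,\mathbf a_n$; $X\in\mathbb{R}^{n\times r}$ has rows $\mathbf x^1,\dots,\mathbf x^n$, $\operatorname{supp}X=\{i:\mathbf x^i\neq 0\}$ and $|\operatorname{supp}X|=k$; $B=AX\in\mathbb{R}^{m\times r}$ has full column rank $r$. For an index set $I$, $A_I$ is the submatrix of $A$ formed by the columns indexed by $I$, and $[A_I~B]$ denotes horizontal concatenation. The lower restricted isometry constant $\delta^L_s(A)$ is the smallest $\delta\ge0$ such that $(1-\delta)\|\mathbf x\|_2^2\le\|A\mathbf x\|_2^2$ for all $\mathbf x\in\mathbb{R}^n$ with at most $s$ nonzero entries; thus $\delta^L_s(A)<1$ means every $s$ columns of $A$ are linearly independent. "The nonzero rows of $X$ are in general position" means any $r$ of the $k$ nonzero rows of $X$ (vectors in $\mathbb{R}^r$) are linearly independent. *)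

theory Defs
  imports "HOL-Analysis.Analysis"
begin

definition supp_rows :: "real^'r^'n \<Rightarrow> 'n set" where
  "supp_rows X = {i. row i X \<noteq> 0}"

definition lower_ric :: "nat \<Rightarrow> real^'n^'m \<Rightarrow> real" where
  "lower_ric s A = Inf {\<delta>. \<delta> \<ge> 0 \<and>
      (\<forall>x::real^'n. card {i. x $ i \<noteq> 0} \<le> s \<longrightarrow>
          (1 - \<delta>) * (norm x)^2 \<le> (norm (A *v x))^2)}"

text \<open>Nonzero rows of X in general position: any r (= number of columns) of them
  are linearly independent (as a family, i.e. distinct and independent).\<close>
definition rows_general_position :: "real^'r^'n \<Rightarrow> bool" where
  "rows_general_position X \<longleftrightarrow>
     (\<forall>S \<subseteq> supp_rows X. card S = CARD('r) \<longrightarrow>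
        inj_on (\<lambda>i. row i X) S \<and> independent ((\<lambda>i. row i X) ` S))"

definition rank_concat :: "real^'n^'m \<Rightarrow> 'n set \<Rightarrow> real^'r^'m \<Rightarrow> nat" where
  "rank_concat A I B = dim ((\<lambda>i. column i A) ` I \<union> columns B)"

end

theory Submission
  imports Defs
begin

(* Since |S| = k, condition (i) |I \<inter> S| \<ge> k - r + 1 just says |S - I| < r, and the
   theorem compares this with rank [A_I B] < |I| + r.

   If |S - I| < r, the rows of X indexed by S - I span a proper subspace of R^r, so some
   y \<noteq> 0 is orthogonal to all of them; then X y is supported on I and B y = A (X y) is
   a combination of the columns of A_I, which makes [A_I B] column-rank deficient.

   If |S - I| \<ge> r, the map (c, z) \<mapsto> A c + B z on {c supported on I} \<times> R^r is
   injective: A (c + X z) = 0 with c + X z supported on (I - S) \<union> S, a set of size at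
   most 2k - r + l, so the restricted isometry bound forces c + X z = 0; on r indices of
   S - I this says the corresponding rows of X are orthogonal to z, hence z = 0 by general
   position, and then c = 0.  So rank [A_I B] \<ge> |I| + r. *)

definition supported_on :: "'n set \<Rightarrow> (real^'n) set" where
  "supported_on I = {c. \<forall>i. i \<notin> I \<longrightarrow> c $ i = 0}"

lemma subspace_supported_on: "subspace (supported_on I)"
  unfolding supported_on_def by (auto simp: subspace_def)

lemma dim_supported_on: "dim (supported_on I :: (real^'n) set) = card I"
  unfolding supported_on_def
  using dim_substandard_cart[where 'a=real and 'n='n, of I] by (simp add: dim_vec_eq)

lemma matrix_vector_mult_component_row:
  fixes X :: "real^'r^'n"
  shows "(X *v z) $ i = row i X \<bullet> z"
  by (simp add: matrix_vector_mul_component row_def vec_lambda_eta)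

lemma matrix_vector_mult_supported_in_span:
  fixes A :: "real^'n^'m"
  assumes "c \<in> supported_on I"
  shows "A *v c \<in> span ((\<lambda>i. column i A) ` I)"
  unfolding matrix_mult_sum scalar_mult_eq_scaleR
proof (rule span_sum)
  fix i :: 'n
  show "c $ i *\<^sub>R column i A \<in> span ((\<lambda>i. column i A) ` I)"
    using assms by (cases "i \<in> I") (auto simp: supported_on_def span_base span_scale span_zero)
qed

lemma lower_ric_sparse_kernel:
  fixes A :: "real^'n^'m" and x :: "real^'n"
  assumes "lower_ric s A < 1" "card {i. x $ i \<noteq> 0} \<le> s" "A *v x = 0"
  shows "x = 0"
proof -
  let ?D = "{\<delta>. \<delta> \<ge> 0 \<and>
      (\<forall>x::real^'n. card {i. x $ i \<noteq> 0} \<le> s \<longrightarrow>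
          (1 - \<delta>) * (norm x)^2 \<le> (norm (A *v x))^2)}"
  have "1 \<in> ?D" by simp
  hence nonempty: "?D \<noteq> {}" by blast
  have bounded: "bdd_below ?D" by (rule bdd_belowI[of _ 0]) simp
  have "Inf ?D < 1" using assms(1) by (simp add: lower_ric_def)
  then obtain d where d: "d \<in> ?D" "d < 1"
    using cInf_less_iff[OF nonempty bounded] by blast
  hence "(1 - d) * (norm x)^2 \<le> 0" using assms(2,3) by auto
  with \<open>d < 1\<close> have "(norm x)^2 \<le> 0" by (simp add: mult_le_0_iff)
  thus ?thesis by simp
qed

text \<open>Any r nonzero rows of X in general position span R^r, so only 0 is orthogonal to all of them.\<close>
lemma general_position_orthogonal_zero:
  fixes X :: "real^'r^'n" and z :: "real^'r"
  assumes "rows_general_position X" "R \<subseteq> supp_rows X" "card R = CARD('r)"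
    and "\<And>i. i \<in> R \<Longrightarrow> row i X \<bullet> z = 0"
  shows "z = 0"
proof -
  let ?V = "(\<lambda>i. row i X) ` R"
  have "inj_on (\<lambda>i. row i X) R" "independent ?V"
    using assms(1-3) unfolding rows_general_position_def by auto
  hence "card ?V = DIM(real^'r)" using assms(3) by (simp add: card_image)
  hence "span ?V = UNIV"
    using \<open>independent ?V\<close> eucl.card_ge_dim_independent[of ?V UNIV] by auto
  hence "z \<in> span ?V" by blast
  hence "orthogonal z z"
    by (rule orthogonal_to_span) (use assms(4) in \<open>auto simp: orthogonal_def inner_commute\<close>)
  thus ?thesis using orthogonal_self by blast
qed

text \<open>A nontrivial combination of the columns of B lying in the span of the columns of A_I
  makes one column of B redundant, so rank [A_I B] < |I| + r.\<close>
lemma rank_concat_lt_if_dependent: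
  fixes A :: "real^'n^'m" and B :: "real^'r^'m"
  assumes "y \<noteq> 0" and "B *v y \<in> span ((\<lambda>i. column i A) ` I)"
  shows "rank_concat A I B < card I + CARD('r)"
proof -
  obtain j where j: "y $ j \<noteq> 0" using assms(1) by (metis vec_eq_iff zero_index)
  define T' where "T' = (\<lambda>i. column i A) ` I \<union> (\<lambda>j'. column j' B) ` (UNIV - {j})"
  have others: "(\<Sum>i\<in>UNIV - {j}. y $ i *\<^sub>R column i B) \<in> span T'"
    by (intro span_sum span_scale span_base) (auto simp: T'_def)
  have "B *v y \<in> span T'"
    using assms(2) span_mono[of _ T'] unfolding T'_def by blast
  moreover have "B *v y = y $ j *\<^sub>R column j B + (\<Sum>i\<in>UNIV - {j}. y $ i *\<^sub>R column i B)"
    unfolding matrix_mult_sum scalar_mult_eq_scaleR by (simp add: sum.remove[of UNIV j])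
  ultimately have "y $ j *\<^sub>R column j B \<in> span T'"
    using span_diff[OF _ others] by fastforce
  hence "(1 / y $ j) *\<^sub>R (y $ j *\<^sub>R column j B) \<in> span T'" by (rule span_scale)
  hence "column j B \<in> span T'" using j by simp
  hence "(\<lambda>i. column i A) ` I \<union> columns B \<subseteq> span T'"
    unfolding columns_def T'_def by (auto intro: span_base)
  hence "rank_concat A I B \<le> card T'"
    unfolding rank_concat_def by (rule dim_le_card) (simp add: T'_def)
  also have "\<dots> \<le> card I + card (UNIV - {j})"
    unfolding T'_def by (intro card_Un_le[THEN order_trans] add_mono card_image_le) auto
  also have "\<dots> < card I + CARD('r)" by (simp add: card_Diff_singleton)
  finally show ?thesis .
qed

text \<open>If A c + B z = 0 with c supported on I forces c = 0 and z = 0, then the linear map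
  (c, z) \<mapsto> A c + B z embeds an (|I| + r)-dimensional space into the column space of [A_I B].\<close>
lemma rank_concat_ge_if_independent:
  fixes A :: "real^'n^'m" and B :: "real^'r^'m"
  assumes "\<And>c z. c \<in> supported_on I \<Longrightarrow> A *v c + B *v z = 0 \<Longrightarrow> c = 0 \<and> z = 0"
  shows "card I + CARD('r) \<le> rank_concat A I B"
proof -
  define f where "f = (\<lambda>p::(real^'n) \<times> (real^'r). A *v fst p + B *v snd p)"
  define W where "W = supported_on I \<times> (UNIV :: (real^'r) set)"
  have "linear f" unfolding f_def
    by (intro linearI) (auto simp: matrix_vector_right_distrib matrix_vector_mult_scaleR scaleR_add_right)
  have "subspace W" unfolding W_def by (intro subspace_Times subspace_supported_on subspace_UNIV)
  have "dim W = card I + CARD('r)"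
    unfolding W_def by (simp add: dim_Times subspace_supported_on dim_supported_on)
  have "inj_on f (span W)"
    unfolding span_eq_iff[THEN iffD2, OF \<open>subspace W\<close>]
      linear_inj_on_iff_eq_0[OF \<open>linear f\<close> \<open>subspace W\<close>]
    using assms by (auto simp: W_def f_def zero_prod_def)
  hence "dim (f ` W) = card I + CARD('r)"
    using dim_image_eq[OF \<open>linear f\<close>] \<open>dim W = _\<close> by simp
  moreover have "f ` W \<subseteq> span ((\<lambda>i. column i A) ` I \<union> columns B)"
  proof
    fix w assume "w \<in> f ` W"
    then obtain c z where "c \<in> supported_on I" "w = A *v c + B *v z"
      unfolding W_def f_def by auto
    moreover have "A *v c \<in> span ((\<lambda>i. column i A) ` I)"
      by (rule matrix_vector_mult_supported_in_span) fact
    moreover have "B *v z \<in> span (columns B)"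
      using matrix_vector_mult_supported_in_span[of z UNIV B]
      by (simp add: supported_on_def columns_def full_SetCompr_eq)
    ultimately show "w \<in> span ((\<lambda>i. column i A) ` I \<union> columns B)"
      using span_mono[OF sup_ge1] span_mono[OF sup_ge2] by (blast intro: span_add)
  qed
  hence "dim (f ` W) \<le> rank_concat A I B"
    unfolding rank_concat_def by (metis dim_subset dim_span)
  ultimately show ?thesis by simp
qed

text \<open>Fewer than r support rows of X outside I: some y \<noteq> 0 is orthogonal to all of them,
  so X y vanishes off I.\<close>
lemma combination_supported_on_if_few_rows_outside:
  fixes X :: "real^'r^'n"
  assumes "card (supp_rows X - I) < CARD('r)"
  shows "\<exists>y. y \<noteq> 0 \<and> X *v y \<in> supported_on I"
proof -
  let ?R = "(\<lambda>i. row i X) ` (supp_rows X - I)"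
  have "dim ?R \<le> card (supp_rows X - I)"
    by (rule order_trans[OF dim_le_card' card_image_le]) simp_all
  hence "dim ?R < DIM(real^'r)" using assms by simp
  then obtain y :: "real^'r" where y: "y \<noteq> 0" "\<And>w. w \<in> span ?R \<Longrightarrow> orthogonal y w"
    by (rule orthogonal_to_subspace_exists) blast
  have "(X *v y) $ i = 0" if "i \<notin> I" for i
  proof (cases "i \<in> supp_rows X")
    case True
    hence "orthogonal y (row i X)" using \<open>i \<notin> I\<close> by (intro y(2) span_base) auto
    thus ?thesis by (simp add: matrix_vector_mult_component_row orthogonal_def inner_commute)
  next
    case False
    thus ?thesis by (simp add: matrix_vector_mult_component_row supp_rows_def)
  qed
  thus ?thesis using y(1) unfolding supported_on_def by blast
qed

text \<open>At least r support rows of X outside I: A c + A X z = 0 with c supported on I forces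
  c = 0 and z = 0, via the isometry bound on c + X z and general position of the rows.\<close>
lemma concat_kernel_trivial_if_many_rows_outside:
  fixes A :: "real^'n^'m" and X :: "real^'r^'n"
  assumes ric: "lower_ric s A < 1"
    and sparsity: "card (I - supp_rows X) + card (supp_rows X) \<le> s"
    and gp: "rows_general_position X"
    and many: "CARD('r) \<le> card (supp_rows X - I)"
    and c: "c \<in> supported_on I"
    and kernel: "A *v c + (A ** X) *v z = 0"
  shows "c = 0 \<and> z = 0"
proof -
  define v where "v = c + X *v z"
  have "A *v v = 0"
    using kernel by (simp add: v_def matrix_vector_right_distrib matrix_vector_mul_assoc)
  moreover have "card {i. v $ i \<noteq> 0} \<le> s"
  proof -
    have "{i. v $ i \<noteq> 0} \<subseteq> (I - supp_rows X) \<union> supp_rows X"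
      using c by (auto simp: v_def supported_on_def matrix_vector_mult_component_row supp_rows_def)
    hence "card {i. v $ i \<noteq> 0} \<le> card ((I - supp_rows X) \<union> supp_rows X)"
      by (rule card_mono[rotated]) simp
    also have "\<dots> \<le> card (I - supp_rows X) + card (supp_rows X)" by (rule card_Un_le)
    finally show ?thesis using sparsity by linarith
  qed
  ultimately have "v = 0" using lower_ric_sparse_kernel[OF ric] by blast
  obtain R where R: "R \<subseteq> supp_rows X - I" "card R = CARD('r)"
    using many by (meson obtain_subset_with_card_n)
  have "row i X \<bullet> z = 0" if "i \<in> R" for i
  proof -
    have "c $ i = 0" using c R(1) that by (auto simp: supported_on_def)
    moreover have "v $ i = 0" using \<open>v = 0\<close> by simp
    ultimately show ?thesis by (simp add: v_def matrix_vector_mult_component_row)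
  qed
  hence "z = 0" using general_position_orthogonal_zero[OF gp _ R(2)] R(1) by blast
  with \<open>v = 0\<close> show ?thesis by (simp add: v_def)
qed

theorem theorem1:
  fixes A :: "real^'n^'m" and X :: "real^'r^'n" and B :: "real^'r^'m"
    and k l :: nat and I :: "'n set"
  assumes "CARD('r) \<le> CARD('m)" and "CARD('m) < CARD('n)"
    and "CARD('r) \<le> k"
    and "card (supp_rows X) = k"
    and "B = A ** X"
    and "rank B = CARD('r)"
    and "1 \<le> l" and "l \<le> CARD('r)"
    and "0 \<le> lower_ric (2 * k - CARD('r) + l) A"
    and "lower_ric (2 * k - CARD('r) + l) A < 1"
    and "rows_general_position X"
    and "card I \<le> min (2 * (k - CARD('r)) + l) k"
    and "card (I - supp_rows X) \<le> k - CARD('r) + l"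
  shows "card (I \<inter> supp_rows X) \<ge> k - CARD('r) + 1 \<longleftrightarrow>
         rank_concat A I B < card I + CARD('r)"
proof -
  have "card (supp_rows X) = card (I \<inter> supp_rows X) + card (supp_rows X - I)"
    by (metis card_Int_Diff finite Int_commute)
  hence outside: "card (I \<inter> supp_rows X) \<ge> k - CARD('r) + 1 \<longleftrightarrow> card (supp_rows X - I) < CARD('r)"
    using assms(3,4) by linarith
  have sparsity: "card (I - supp_rows X) + card (supp_rows X) \<le> 2 * k - CARD('r) + l"
    using assms(3,4,13) by linarith
  show ?thesis
    unfolding outside
  proof
    assume "card (supp_rows X - I) < CARD('r)"
    then obtain y where y: "y \<noteq> 0" "X *v y \<in> supported_on I"
      using combination_supported_on_if_few_rows_outside by blast
    have "B *v y = A *v (X *v y)" by (simp add: assms(5) matrix_vector_mul_assoc)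
    also have "\<dots> \<in> span ((\<lambda>i. column i A) ` I)"
      using y(2) by (rule matrix_vector_mult_supported_in_span)
    finally show "rank_concat A I B < card I + CARD('r)"
      using y(1) rank_concat_lt_if_dependent by blast
  next
    assume rank: "rank_concat A I B < card I + CARD('r)"
    show "card (supp_rows X - I) < CARD('r)"
    proof (rule ccontr)
      assume "\<not> card (supp_rows X - I) < CARD('r)"
      hence "card I + CARD('r) \<le> rank_concat A I B"
        unfolding assms(5) using concat_kernel_trivial_if_many_rows_outside[OF assms(10) sparsity assms(11)]
        by (intro rank_concat_ge_if_independent) simp
      with rank show False by simp
    qed
  qed
qed

end
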